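(* Let $n\in\mathbb{N}$ and $\nu^*(u) = (\sin(nu), -\cos(nu))^{\top}$ for $u\in\mathbb{S}^1_{2\pi}$. Let $X^*:\mathbb{S}^1_{2\pi}\to\mathbb{R}^2$ be a non-constant map such that $(X^*,\nu^* )$ is a Legendre curve, and let $\lambda^*:[0,\infty)\to\mathbb{R}$ with $\lambda^*(0)=1$. Then $(X(u,t),\nu(u,t)) := (\lambda^*(t)X^*(u),\nu^*(u))$ is an inverse curvature flow (of class $C([0,\infty);C^1)\cap C^\infty(\mathbb{S}^1_{2\pi}\times(0,\infty))$) if and only if $$\lambda^*(t) = e^{(1-\frac{m^2}{n^2})t}\quad (t\ge 0),$$ $$X^*(u) = C_1\begin{pmatrix} \frac{n}{n^2-m^2}\sin(nu)\cos(mu) - \frac{m}{n^2-m^2}\cos(nu)\sin(mu)\\ -\frac{n}{n^2-m^2}\cos(nu)\cos(mu) - \frac{m}{n^2-m^2}\sin(nu)\sin(mu)\end{pmatrix} + C_2\begin{pmatrix} \frac{n}{n^2-m^2}\sin(nu)\sin(mu) + \frac{m}{n^2-m^2}\cos(nu)\cos(mu)\\ -\frac{n}{n^2-m^2}\cos(nu)\sin(mu) + \frac{m}{n^2-m^2}\sin(nu)\cos(mu)\end{pmatrix}$$ for $u\in\mathbb{S}^1_{2\pi}$, where the constants $m, C_1, C_2$ satisfy one of: (i) $m\in\mathbb{N}\setminus\{n\}$ and $(C_1,C_2)\in\mathbb{R}^2\setminus\{(0,0)\}$; or (ii) $m=0$, $C_1\neq0$, $C_2=0$. Moreover, in this case the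 Legendre curvature $(\ell^*,\beta^* )$ of $(X^*,\nu^* )$ is $\ell^*(u)=n$, $\beta^*(u) = C_1\cos(mu)+C_2\sin(mu)$.
   Context: $\mathbb{S}^1_{2\pi} = \mathbb{R}/2\pi\mathbb{Z}$ and $\mathbb{S}^1\subset\mathbb{R}^2$ is the unit circle; $J$ denotes anticlockwise rotation by $\pi/2$. A Legendre curve is a $C^1$ pair $(X,\nu):\mathbb{S}^1_{2\pi}\to\mathbb{R}^2\times\mathbb{S}^1$ with $\langle \partial_u X,\nu\rangle = 0$; $\mu=J\nu$; its Legendre curvature is $\ell = \langle\partial_u\nu,\mu\rangle$, $\beta=\langle\partial_uX,\mu\rangle$; it is $\ell$-convex if $\ell>0$. A flow of Legendre curves is a map $(X,\nu):\mathbb{S}^1_{2\pi}\times[0,\infty)\to\mathbb{R}^2\times\mathbb{S}^1$ each of whose time slices is a Legendre curve, with normal velocity $N=\langle\partial_tX,\nu\rangle$. An inverse curvature flow is such a flow, smooth for $t>0$, whose time slices are $\ell$-convex for $t>0$ and with $N=\beta/\ell$ on $\mathbb{S}^1_{2\pi}\times(0,\infty)$. *)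

theory Defs
  imports "HOL-Analysis.Analysis"
begin

text \<open>The plane R^2 is modelled as real \<times> real (with its product inner product);
  maps on S^1_{2pi} = R/2piZ are modelled as 2pi-periodic maps on real.\<close>

definition rotJ :: "real \<times> real \<Rightarrow> real \<times> real" where
  "rotJ v = (- snd v, fst v)"

definition periodic2pi :: "(real \<Rightarrow> 'a) \<Rightarrow> bool" where
  "periodic2pi f \<longleftrightarrow> (\<forall>u. f (u + 2 * pi) = f u)"

definition C1_map :: "(real \<Rightarrow> real \<times> real) \<Rightarrow> bool" where
  "C1_map f \<longleftrightarrow> (\<exists>f'. (\<forall>u. (f has_vector_derivative f' u) (at u)) \<and> continuous_on UNIV f')"

definition legendre_curve :: "(real \<Rightarrow> real \<times> real) \<Rightarrow> (real \<Rightarrow> real \<times> real) \<Rightarrow> bool" where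
  "legendre_curve X \<nu> \<longleftrightarrow> periodic2pi X \<and> periodic2pi \<nu> \<and> C1_map X \<and> C1_map \<nu>
     \<and> (\<forall>u. norm (\<nu> u) = 1)
     \<and> (\<forall>u. inner (vector_derivative X (at u)) (\<nu> u) = 0)"

definition leg_ell :: "(real \<Rightarrow> real \<times> real) \<Rightarrow> (real \<Rightarrow> real \<times> real) \<Rightarrow> real \<Rightarrow> real" where
  "leg_ell X \<nu> u = inner (vector_derivative \<nu> (at u)) (rotJ (\<nu> u))"

definition leg_beta :: "(real \<Rightarrow> real \<times> real) \<Rightarrow> (real \<Rightarrow> real \<times> real) \<Rightarrow> real \<Rightarrow> real" where
  "leg_beta X \<nu> u = inner (vector_derivative X (at u)) (rotJ (\<nu> u))"

text \<open>C^infinity on an open set S of R^2 (coordinates (u,t)): all iterated partial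
  derivatives exist and are continuous; F i j stands for d_u^i d_t^j f.\<close>
definition smooth2_on :: "(real \<times> real) set \<Rightarrow> (real \<Rightarrow> real \<Rightarrow> 'b::real_normed_vector) \<Rightarrow> bool" where
  "smooth2_on S f \<longleftrightarrow> (\<exists>F :: nat \<Rightarrow> nat \<Rightarrow> real \<Rightarrow> real \<Rightarrow> 'b. F 0 0 = f \<and>
     (\<forall>i j. continuous_on S (\<lambda>(u, t). F i j u t) \<and>
        (\<forall>u t. (u, t) \<in> S \<longrightarrow>
           ((\<lambda>v. F i j v t) has_vector_derivative F (Suc i) j u t) (at u) \<and>
           ((\<lambda>s. F i j u s) has_vector_derivative F i (Suc j) u t) (at t))))"

definition legendre_flow :: "(real \<Rightarrow> real \<Rightarrow> real \<times> real) \<Rightarrow> (real \<Rightarrow> real \<Rightarrow> real \<times> real) \<Rightarrow> bool" where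
  "legendre_flow X \<nu> \<longleftrightarrow> (\<forall>t\<ge>0. legendre_curve (\<lambda>u. X u t) (\<lambda>u. \<nu> u t))"

text \<open>Class C([0,oo); C^1): the map and its u-derivative are jointly continuous on S^1 x [0,oo).\<close>
definition cont_C1_in_time :: "(real \<Rightarrow> real \<Rightarrow> real \<times> real) \<Rightarrow> bool" where
  "cont_C1_in_time X \<longleftrightarrow> continuous_on (UNIV \<times> {0..}) (\<lambda>(u, t). X u t)
     \<and> continuous_on (UNIV \<times> {0..}) (\<lambda>(u, t). vector_derivative (\<lambda>v. X v t) (at u))"

definition normal_velocity :: "(real \<Rightarrow> real \<Rightarrow> real \<times> real) \<Rightarrow> (real \<Rightarrow> real \<Rightarrow> real \<times> real) \<Rightarrow> real \<Rightarrow> real \<Rightarrow> real" where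
  "normal_velocity X \<nu> u t = inner (vector_derivative (\<lambda>s. X u s) (at t)) (\<nu> u t)"

definition inverse_curvature_flow :: "(real \<Rightarrow> real \<Rightarrow> real \<times> real) \<Rightarrow> (real \<Rightarrow> real \<Rightarrow> real \<times> real) \<Rightarrow> bool" where
  "inverse_curvature_flow X \<nu> \<longleftrightarrow> legendre_flow X \<nu>
     \<and> cont_C1_in_time X \<and> cont_C1_in_time \<nu>
     \<and> smooth2_on (UNIV \<times> {0<..}) X \<and> smooth2_on (UNIV \<times> {0<..}) \<nu>
     \<and> (\<forall>u t. t > 0 \<longrightarrow> leg_ell (\<lambda>v. X v t) (\<lambda>v. \<nu> v t) u > 0)
     \<and> (\<forall>u t. t > 0 \<longrightarrow> normal_velocity X \<nu> u t
           = leg_beta (\<lambda>v. X v t) (\<lambda>v. \<nu> v t) u / leg_ell (\<lambda>v. X v t) (\<lambda>v. \<nu> v t) u)"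

end

theory Submission
  imports Defs
begin

text \<open>
  For a homothetic flow \<open>X(u,t) = \<lambda>(t) X\<^sup>*(u)\<close> with fixed normal \<open>\<nu>\<^sup>*\<close>, the curvature
  \<open>\<ell>\<close> does not depend on \<open>t\<close>, \<open>\<beta>\<close> scales with \<open>\<lambda>(t)\<close>, and the normal velocity is
  \<open>\<lambda>'(t) p(u)\<close> with the support function \<open>p = \<langle>X\<^sup>*, \<nu>\<^sup>*\<rangle>\<close>. So the flow equation separates:
  it holds iff \<open>\<lambda>(t) = e\<^sup>c\<^sup>t\<close> and \<open>\<beta>\<^sup>* = c p \<ell>\<^sup>*\<close> for a constant \<open>c\<close>.

  For \<open>\<nu>\<^sup>*(u) = (sin nu, -cos nu)\<close> we have \<open>\<ell>\<^sup>* = n\<close>, and writing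
  \<open>X\<^sup>* = p \<nu>\<^sup>* + q J\<nu>\<^sup>*\<close> the Legendre condition gives \<open>p' = n q\<close> and \<open>q' = \<beta>\<^sup>* - n p\<close>,
  hence \<open>p'' = n\<^sup>2 (c - 1) p\<close>. A nonzero \<open>2\<pi>\<close>-periodic solution forces
  \<open>c = 1 - m\<^sup>2/n\<^sup>2\<close> with \<open>m \<in> \<nat>\<close> and \<open>p = A cos mu + B sin mu\<close>, and \<open>m = n\<close> would make
  \<open>X\<^sup>*\<close> constant. Conversely the profiles of the theorem satisfy
  \<open>X\<^sup>*' = (C\<^sub>1 cos mu + C\<^sub>2 sin mu) J\<nu>\<^sup>*\<close>, which gives the stated \<open>\<beta>\<^sup>*\<close>.
\<close>

section \<open>Homothetic flows\<close>

definition smooth_curve :: "(real \<Rightarrow> 'a::real_normed_vector) \<Rightarrow> bool" where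
  "smooth_curve f \<longleftrightarrow> (\<exists>F. F 0 = f \<and> (\<forall>i u. (F i has_vector_derivative F (Suc i) u) (at u)))"

lemma vector_derivative_scaleR_const:
  assumes "(f has_vector_derivative f') (at u)"
  shows "vector_derivative (\<lambda>v. a *\<^sub>R f v) (at u) = a *\<^sub>R f'"
  using has_vector_derivative_scaleR[OF DERIV_const[of a] assms]
  by (simp add: vector_derivative_at)

lemma C1_map_scaleR:
  assumes "C1_map X"
  shows "C1_map (\<lambda>u. a *\<^sub>R X u)"
proof -
  obtain X' where "\<And>u. (X has_vector_derivative X' u) (at u)" and "continuous_on UNIV X'"
    using assms unfolding C1_map_def by metis
  then show ?thesis
    unfolding C1_map_def
    by (intro exI[of _ "\<lambda>u. a *\<^sub>R X' u"] conjI allI continuous_intros)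
      (simp_all add: has_vector_derivative_scaleR[OF DERIV_const[of a], simplified])
qed

lemma legendre_curve_scaleR:
  assumes "legendre_curve X \<nu>"
  shows "legendre_curve (\<lambda>u. a *\<^sub>R X u) \<nu>"
proof -
  obtain X' where dX: "\<And>u. (X has_vector_derivative X' u) (at u)"
    using assms unfolding legendre_curve_def C1_map_def by metis
  then have "vector_derivative (\<lambda>u. a *\<^sub>R X u) (at u) = a *\<^sub>R vector_derivative X (at u)" for u
    using vector_derivative_scaleR_const[OF dX] vector_derivative_at[OF dX] by simp
  then show ?thesis
    using assms C1_map_scaleR by (simp add: legendre_curve_def periodic2pi_def)
qed

lemma leg_beta_scaleR:
  assumes "C1_map X"
  shows "leg_beta (\<lambda>v. a *\<^sub>R X v) \<nu> u = a * leg_beta X \<nu> u"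
proof -
  obtain X' where dX: "\<And>u. (X has_vector_derivative X' u) (at u)"
    using assms unfolding C1_map_def by metis
  show ?thesis
    using vector_derivative_scaleR_const[OF dX] vector_derivative_at[OF dX]
    by (simp add: leg_beta_def)
qed

lemma normal_velocity_scaleR:
  assumes "(lam has_real_derivative l) (at t)"
  shows "normal_velocity (\<lambda>u t. lam t *\<^sub>R X u) (\<lambda>u t. \<nu> u) u t = l * inner (X u) (\<nu> u)"
proof -
  have "((\<lambda>s. lam s *\<^sub>R X u) has_vector_derivative l *\<^sub>R X u) (at t)"
    using has_vector_derivative_scaleR[OF assms has_vector_derivative_const[of "X u"]] by simp
  then show ?thesis
    by (simp add: normal_velocity_def vector_derivative_at)
qed

lemma cont_C1_in_time_scaleR:
  assumes lam: "continuous_on {0..} lam" and X: "C1_map X"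
  shows "cont_C1_in_time (\<lambda>u t. lam t *\<^sub>R X u)"
proof -
  obtain X' where dX: "\<And>u. (X has_vector_derivative X' u) (at u)" and cX': "continuous_on UNIV X'"
    using X unfolding C1_map_def by metis
  have cX: "continuous_on UNIV X"
    using dX by (intro continuous_at_imp_continuous_on)
      (auto intro: has_vector_derivative_continuous)
  have "continuous_on (UNIV \<times> {0..}) (\<lambda>(u, t). lam t *\<^sub>R Y u)"
      if "continuous_on UNIV Y" for Y :: "real \<Rightarrow> real \<times> real"
    unfolding case_prod_beta
    by (intro continuous_on_scaleR continuous_on_compose2[OF lam] continuous_on_compose2[OF that]
        continuous_intros) auto
  then show ?thesis
    using cX cX' vector_derivative_scaleR_const[OF dX]
    by (simp add: cont_C1_in_time_def)
qed

lemma smooth2_on_scaleR: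
  fixes g :: "real \<Rightarrow> real" and h :: "real \<Rightarrow> 'a::real_normed_vector"
  assumes "G 0 = g" and dG: "\<And>j t. t \<in> T \<Longrightarrow> (G j has_real_derivative G (Suc j) t) (at t)"
    and "smooth_curve h"
  shows "smooth2_on (UNIV \<times> T) (\<lambda>u t. g t *\<^sub>R h u)"
proof -
  obtain H where "H 0 = h" and dH: "\<And>i u. (H i has_vector_derivative H (Suc i) u) (at u)"
    using \<open>smooth_curve h\<close> unfolding smooth_curve_def by metis
  show ?thesis
    unfolding smooth2_on_def
  proof (intro exI[of _ "\<lambda>i j u t. G j t *\<^sub>R H i u"] conjI allI impI)
    fix i j
    have cG: "continuous_on T (G j)"
      by (rule DERIV_continuous_on) (use dG has_field_derivative_at_within in blast)
    have cH: "continuous_on UNIV (H i)"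
      using dH by (intro continuous_at_imp_continuous_on)
        (auto intro: has_vector_derivative_continuous)
    show "continuous_on (UNIV \<times> T) (\<lambda>(u, t). G j t *\<^sub>R H i u)"
      unfolding case_prod_beta
      by (intro continuous_on_scaleR continuous_on_compose2[OF cG] continuous_on_compose2[OF cH]
          continuous_intros) auto
    fix u t :: real
    assume "(u, t) \<in> UNIV \<times> T"
    then show "((\<lambda>v. G j t *\<^sub>R H i v) has_vector_derivative G j t *\<^sub>R H (Suc i) u) (at u)"
      and "((\<lambda>s. G j s *\<^sub>R H i u) has_vector_derivative G (Suc j) t *\<^sub>R H i u) (at t)"
      using has_vector_derivative_scaleR[OF DERIV_const dH[of i u]]
        has_vector_derivative_scaleR[OF dG has_vector_derivative_const] by auto
  qed (use \<open>G 0 = g\<close> \<open>H 0 = h\<close> in simp)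
qed

lemma has_real_derivative_exp_on_open:
  assumes "open T" and "t \<in> T" and g: "\<And>t. t \<in> T \<Longrightarrow> g t = exp (c * t)"
  shows "(g has_real_derivative c * exp (c * t)) (at t)"
  by (rule has_field_derivative_transform_within_open[of "\<lambda>t. exp (c * t)" _ _ T])
    (use assms in \<open>auto intro!: derivative_eq_intros\<close>)

lemma smooth2_on_exp_scaleR:
  assumes "open T" and g: "\<And>t. t \<in> T \<Longrightarrow> g t = exp (c * t)" and "smooth_curve h"
  shows "smooth2_on (UNIV \<times> T) (\<lambda>u t. g t *\<^sub>R h u)"
  \<comment> \<open>\<open>smooth2_on\<close> fixes the bottom of the tower globally, so it must be \<open>g\<close> itself,
    which agrees with the exponential only on \<open>T\<close>.\<close>
proof (rule smooth2_on_scaleR[of "\<lambda>j. if j = 0 then g else (\<lambda>t. c ^ j * exp (c * t))"])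
  fix j and t :: real
  assume "t \<in> T"
  have "((\<lambda>t. c ^ j * exp (c * t)) has_real_derivative c ^ Suc j * exp (c * t)) (at t)"
    by (auto intro!: derivative_eq_intros)
  then show "((if j = 0 then g else (\<lambda>t. c ^ j * exp (c * t))) has_real_derivative
      (if Suc j = 0 then g else (\<lambda>t. c ^ Suc j * exp (c * t))) t) (at t)"
    using has_real_derivative_exp_on_open[OF \<open>open T\<close> \<open>t \<in> T\<close> g] by simp
qed (use \<open>smooth_curve h\<close> in simp_all)

lemma smooth2_on_has_vector_derivative_time:
  assumes "smooth2_on S f" and "(u, t) \<in> S"
  shows "\<exists>D. ((\<lambda>s. f u s) has_vector_derivative D) (at t)"
  using assms unfolding smooth2_on_def by metis

lemma has_real_derivative_scaleR_factor:
  fixes x :: "'a::real_inner"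
  assumes "((\<lambda>s. lam s *\<^sub>R x) has_vector_derivative D) (at t)" and "x \<noteq> 0"
  shows "(lam has_real_derivative inner D x / inner x x) (at t)"
proof -
  have "((\<lambda>s. inner (lam s *\<^sub>R x) x) has_vector_derivative inner D x) (at t)"
    by (rule bounded_linear.has_vector_derivative[OF bounded_linear_inner_left assms(1)])
  then have "((\<lambda>s. lam s * inner x x) has_real_derivative inner D x) (at t)"
    by (simp add: has_real_derivative_iff_has_vector_derivative)
  from DERIV_cdivide[OF this, of "inner x x"] show ?thesis
    using assms(2) by simp
qed

lemma continuous_on_scaleR_factor:
  fixes x :: "'a::real_inner"
  assumes "continuous_on S (\<lambda>t. lam t *\<^sub>R x)" and "x \<noteq> 0"
  shows "continuous_on S lam"
proof -
  have "continuous_on S (\<lambda>t. inner (lam t *\<^sub>R x) x / inner x x)"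
    using assms(2) by (intro continuous_intros assms(1)) simp
  then show ?thesis
    using assms(2) by simp
qed

lemma exp_unique_on_nonneg:
  assumes "continuous_on {0..} lam" and "lam 0 = 1"
    and dlam: "\<And>t. t > 0 \<Longrightarrow> (lam has_real_derivative c * lam t) (at t)"
    and "t \<ge> 0"
  shows "lam t = exp (c * t)"
proof (cases "t = 0")
  case False
  define g where "g s = lam s * exp (- c * s)" for s
  have "continuous_on {0..t} g"
    unfolding g_def by (intro continuous_intros continuous_on_subset[OF assms(1)]) auto
  moreover have "(g has_real_derivative 0) (at s)" if "0 < s" for s
    unfolding g_def[abs_def]
    by (rule derivative_eq_intros dlam[OF that] refl)+ (simp add: algebra_simps)
  ultimately have "g t = g 0"
    using False \<open>t \<ge> 0\<close> by (intro DERIV_isconst2[of 0 t g]) auto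
  then show ?thesis
    using \<open>lam 0 = 1\<close> by (simp add: g_def exp_minus field_simps)
qed (simp add: \<open>lam 0 = 1\<close>)

lemma inverse_curvature_flow_scalingI:
  assumes leg: "legendre_curve X \<nu>" and "smooth_curve X" and "smooth_curve \<nu>"
    and ell: "\<And>u. leg_ell X \<nu> u > 0"
    and lam: "\<And>t. t \<ge> 0 \<Longrightarrow> lam t = exp (c * t)"
    and beta: "\<And>u. leg_beta X \<nu> u = c * inner (X u) (\<nu> u) * leg_ell X \<nu> u"
  shows "inverse_curvature_flow (\<lambda>u t. lam t *\<^sub>R X u) (\<lambda>u t. \<nu> u)"
proof -
  have C1: "C1_map X" "C1_map \<nu>"
    using leg by (simp_all add: legendre_curve_def)
  have "continuous_on {0..} (\<lambda>t. exp (c * t))"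
    by (intro continuous_intros)
  then have "continuous_on {0..} lam"
    by (rule continuous_on_cong[THEN iffD1, OF refl, rotated]) (simp add: lam)
  then have "cont_C1_in_time (\<lambda>u t. lam t *\<^sub>R X u)"
    using C1(1) by (rule cont_C1_in_time_scaleR)
  moreover have "cont_C1_in_time (\<lambda>u t. \<nu> u)"
    using cont_C1_in_time_scaleR[of "\<lambda>_. 1", OF continuous_on_const C1(2)] by simp
  moreover have "smooth2_on (UNIV \<times> {0<..}) (\<lambda>u t. lam t *\<^sub>R X u)"
    using lam \<open>smooth_curve X\<close> by (intro smooth2_on_exp_scaleR) auto
  moreover have "smooth2_on (UNIV \<times> {0<..}) (\<lambda>u t. \<nu> u)"
    using smooth2_on_exp_scaleR[of "{0<..}" "\<lambda>_. 1" 0 \<nu>] \<open>smooth_curve \<nu>\<close> by simp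
  moreover have "normal_velocity (\<lambda>u t. lam t *\<^sub>R X u) (\<lambda>u t. \<nu> u) u t
      = leg_beta (\<lambda>v. lam t *\<^sub>R X v) (\<lambda>v. \<nu> v) u / leg_ell (\<lambda>v. lam t *\<^sub>R X v) (\<lambda>v. \<nu> v) u"
    if "t > 0" for u t
  proof -
    have "(lam has_real_derivative c * exp (c * t)) (at t)"
      using that lam by (intro has_real_derivative_exp_on_open[of "{0<..}"]) auto
    then show ?thesis
      using ell[of u] that lam[of t]
      by (simp add: normal_velocity_scaleR leg_beta_scaleR[OF C1(1)] beta leg_ell_def)
  qed
  ultimately show ?thesis
    using leg ell by (simp add: inverse_curvature_flow_def
      legendre_flow_def legendre_curve_scaleR leg_ell_def)
qed

lemma inverse_curvature_flow_scalingD: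
  assumes icf: "inverse_curvature_flow (\<lambda>u t. lam t *\<^sub>R X u) (\<lambda>u t. \<nu> u)"
    and leg: "legendre_curve X \<nu>" and "lam 0 = 1" and p: "inner (X u1) (\<nu> u1) \<noteq> 0"
  shows "\<exists>c. (\<forall>t\<ge>0. lam t = exp (c * t))
      \<and> (\<forall>u. leg_beta X \<nu> u = c * inner (X u) (\<nu> u) * leg_ell X \<nu> u)"
proof -
  have "X u1 \<noteq> 0"
    using p by auto
  have C1: "C1_map X"
    using leg by (simp add: legendre_curve_def)
  have ell: "leg_ell X \<nu> u > 0" for u
  proof -
    have "leg_ell (\<lambda>v. lam 1 *\<^sub>R X v) \<nu> u > 0"
      using icf by (simp add: inverse_curvature_flow_def)
    then show ?thesis
      by (simp add: leg_ell_def)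
  qed
  have "\<exists>l. (lam has_real_derivative l) (at t)" if "t > 0" for t
  proof -
    have "smooth2_on (UNIV \<times> {0<..}) (\<lambda>u t. lam t *\<^sub>R X u)"
      using icf by (simp add: inverse_curvature_flow_def)
    then obtain D where "((\<lambda>s. lam s *\<^sub>R X u1) has_vector_derivative D) (at t)"
      using smooth2_on_has_vector_derivative_time[of _ _ u1 t] \<open>t > 0\<close> by blast
    then show ?thesis
      using has_real_derivative_scaleR_factor \<open>X u1 \<noteq> 0\<close> by blast
  qed
  then obtain l where dlam: "\<And>t. t > 0 \<Longrightarrow> (lam has_real_derivative l t) (at t)"
    by metis
  have flow_eq: "l t * inner (X u) (\<nu> u) = lam t * leg_beta X \<nu> u / leg_ell X \<nu> u"
    if "t > 0" for t u
    using icf that normal_velocity_scaleR[OF dlam[OF that], of X \<nu> u]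
    by (simp add: inverse_curvature_flow_def leg_beta_scaleR[OF C1] leg_ell_def)
  define c where "c = leg_beta X \<nu> u1 / (inner (X u1) (\<nu> u1) * leg_ell X \<nu> u1)"
  have l_eq: "l t = c * lam t" if "t > 0" for t
    using flow_eq[OF that, of u1] p ell[of u1] by (simp add: c_def field_simps)
  have "continuous_on {0..} lam"
  proof (rule continuous_on_scaleR_factor[OF _ \<open>X u1 \<noteq> 0\<close>])
    have "continuous_on (UNIV \<times> {0..}) (\<lambda>(u, t). lam t *\<^sub>R X u)"
      using icf by (simp add: inverse_curvature_flow_def cont_C1_in_time_def)
    then have "continuous_on {0..} (\<lambda>t. (\<lambda>(u, t). lam t *\<^sub>R X u) (u1, t))"
      by (rule continuous_on_compose2) (auto intro!: continuous_intros)
    then show "continuous_on {0..} (\<lambda>t. lam t *\<^sub>R X u1)"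
      by simp
  qed
  then have lam: "lam t = exp (c * t)" if "t \<ge> 0" for t
    using \<open>lam 0 = 1\<close> dlam l_eq that by (intro exp_unique_on_nonneg) auto
  have "leg_beta X \<nu> u = c * inner (X u) (\<nu> u) * leg_ell X \<nu> u" for u
    using flow_eq[of 1 u] l_eq[of 1] lam[of 1] ell[of u]
    by (simp add: field_simps)
  then show ?thesis
    using lam by blast
qed

section \<open>Periodic solutions of the oscillator equation\<close>

definition harmonic :: "real \<Rightarrow> real \<times> real \<Rightarrow> real \<Rightarrow> real" where
  "harmonic m a u = fst a * cos (m * u) + snd a * sin (m * u)"

lemma periodic_mono_imp_const:
  fixes h :: "real \<Rightarrow> real"
  assumes "mono h" and "T > 0" and periodic: "\<And>x. h (x + T) = h x"
  shows "h x = h y"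
proof -
  have shift: "h (x + real N * T) = h x" for x N
  proof (induction N)
    case (Suc N)
    then show ?case
      using periodic[of "x + real N * T"] by (simp add: algebra_simps)
  qed simp
  have "h y \<le> h x" for x y
  proof -
    obtain N :: nat where "(y - x) / T < N"
      using reals_Archimedean2 by blast
    then have "y \<le> x + real N * T"
      using \<open>T > 0\<close> by (simp add: field_simps)
    then show ?thesis
      using \<open>mono h\<close> shift by (metis monoD)
  qed
  then show ?thesis
    by (simp add: order_antisym)
qed

lemma periodic_oscillator_nonoscillating:
  fixes p q :: "real \<Rightarrow> real" and n c :: real
  assumes "n > 0" and "c \<ge> 1"
    and dp: "\<And>u. (p has_real_derivative n * q u) (at u)"
    and dq: "\<And>u. (q has_real_derivative n * (c - 1) * p u) (at u)"
    and "\<And>u. p (u + 2 * pi) = p u" and "\<And>u. q (u + 2 * pi) = q u"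
    and "p u1 \<noteq> 0"
  shows "c = 1 \<and> (\<forall>u. q u = 0 \<and> p u = p 0)"
proof -
  define h where "h u = p u * q u" for u
  have dh: "(h has_real_derivative n * (q u)\<^sup>2 + n * (c - 1) * (p u)\<^sup>2) (at u)" for u
    unfolding h_def[abs_def]
    by (rule derivative_eq_intros dp dq refl)+ (simp add: power2_eq_square algebra_simps)
  have dh_nonneg: "n * (q u)\<^sup>2 + n * (c - 1) * (p u)\<^sup>2 \<ge> 0" for u
    using assms(1,2) by simp
  have mono: "mono h"
  proof (rule monoI)
    show "h x \<le> h y" if "x \<le> y" for x y
      using that dh dh_nonneg by (blast intro: DERIV_nonneg_imp_nondecreasing)
  qed
  have periodic: "h (u + 2 * pi) = h u" for u
    using assms(5,6) by (simp add: h_def)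
  have "h u = h 0" for u
    using periodic_mono_imp_const[of h "2 * pi", OF mono _ periodic] by simp
  then have "(h has_real_derivative 0) (at u)" for u
    using DERIV_const[of "h 0"] by (metis ext)
  then have energy: "n * (q u)\<^sup>2 + n * (c - 1) * (p u)\<^sup>2 = 0" for u
    using dh DERIV_unique by blast
  have q0: "q u = 0" for u
    using energy[of u] assms(1,2) by (simp add: add_nonneg_eq_0_iff)
  have "c = 1"
    using energy[of u1] q0[of u1] assms(1,7) by simp
  moreover have "p u = p 0" for u
    using dp q0 by (intro DERIV_isconst_all) simp
  ultimately show ?thesis
    using q0 by simp
qed

lemma harmonic_oscillator_solution:
  fixes p q :: "real \<Rightarrow> real" and n w :: real
  assumes "n \<noteq> 0" and "w \<noteq> 0"
    and dp: "\<And>u. (p has_real_derivative n * q u) (at u)"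
    and dq: "\<And>u. (q has_real_derivative - (w\<^sup>2 / n) * p u) (at u)"
  shows "p u = harmonic w (p 0, n * q 0 / w) u \<and> q u = w / n * harmonic w (n * q 0 / w, - p 0) u"
proof -
  define A where "A = p 0"
  define B where "B = n * q 0 / w"
  define e where "e u = p u - (A * cos (w * u) + B * sin (w * u))" for u
  define f where "f u = q u - w / n * (B * cos (w * u) - A * sin (w * u))" for u
  have de: "(e has_real_derivative n * f u) (at u)" for u
    unfolding e_def[abs_def]
    by (rule derivative_eq_intros dp refl)+ (use assms(1) in \<open>simp add: f_def algebra_simps\<close>)
  have df: "(f has_real_derivative - (w\<^sup>2 / n) * e u) (at u)" for u
    unfolding f_def[abs_def]
    by (rule derivative_eq_intros dq refl)+
      (use assms(1,2) in \<open>simp add: e_def power2_eq_square field_simps\<close>)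
  define E where "E u = w\<^sup>2 * (e u)\<^sup>2 + n\<^sup>2 * (f u)\<^sup>2" for u
  have "(E has_real_derivative 0) (at u)" for u
    unfolding E_def[abs_def]
    by (rule derivative_eq_intros de df refl)+
      (use assms(1) in \<open>simp add: field_simps power2_eq_square\<close>)
  moreover have "E 0 = 0"
    using assms(1,2) by (simp add: E_def e_def f_def A_def B_def)
  ultimately have "E u = 0" for u
    using DERIV_isconst_all by metis
  then have "e u = 0 \<and> f u = 0" for u
    using assms(1,2) by (simp add: E_def add_nonneg_eq_0_iff)
  then show ?thesis
    unfolding harmonic_def A_def[symmetric] B_def[symmetric]
    by (simp add: e_def f_def algebra_simps)
qed

lemma rotation_fixing_nonzero_imp_cos_eq_1:
  fixes A B \<theta> :: real
  assumes "(A, B) \<noteq> (0, 0)" and "A * cos \<theta> + B * sin \<theta> = A" and "B * cos \<theta> - A * sin \<theta> = B"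
  shows "cos \<theta> = 1"
proof -
  have "(A\<^sup>2 + B\<^sup>2) * (cos \<theta> - 1) = A * (A * cos \<theta> + B * sin \<theta> - A) + B * (B * cos \<theta> - A * sin \<theta> - B)"
    by (simp add: power2_eq_square algebra_simps)
  also have "\<dots> = 0"
    by (simp only: assms(2,3) diff_self mult_zero_right add_0)
  finally show ?thesis
    using assms(1) by (auto simp: sum_power2_eq_zero_iff)
qed

lemma periodic_oscillator_solutions:
  fixes p q :: "real \<Rightarrow> real" and n c :: real
  assumes "n > 0"
    and dp: "\<And>u. (p has_real_derivative n * q u) (at u)"
    and dq: "\<And>u. (q has_real_derivative n * (c - 1) * p u) (at u)"
    and pp: "\<And>u. p (u + 2 * pi) = p u" and pq: "\<And>u. q (u + 2 * pi) = q u"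
    and "p u1 \<noteq> 0"
  shows "\<exists>(m::nat) A B. c = 1 - (real m)\<^sup>2 / n\<^sup>2 \<and> (A, B) \<noteq> (0, 0) \<and> (m = 0 \<longrightarrow> B = 0)
     \<and> (\<forall>u. p u = harmonic m (A, B) u \<and> q u = real m / n * harmonic m (B, - A) u)"
proof (cases "c \<ge> 1")
  case True
  then have "c = 1" and "\<And>u. q u = 0 \<and> p u = p 0"
    using periodic_oscillator_nonoscillating[of n c p q, OF \<open>n > 0\<close>
      True dp dq pp pq \<open>p u1 \<noteq> 0\<close>] by auto
  then show ?thesis
    using \<open>p u1 \<noteq> 0\<close> by (intro exI[of _ 0] exI[of _ "p 0"] exI[of _ 0]) (auto simp: harmonic_def)
next
  case False
  define w where "w = sqrt (n\<^sup>2 * (1 - c))"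
  have "w > 0"
    using False \<open>n > 0\<close> by (simp add: w_def)
  have c: "c = 1 - w\<^sup>2 / n\<^sup>2"
    using False \<open>n > 0\<close> by (simp add: w_def)
  define A where "A = p 0"
  define B where "B = n * q 0 / w"
  have "n * (c - 1) = - (w\<^sup>2 / n)"
    using \<open>n > 0\<close> by (simp add: c power2_eq_square)
  then have sol: "p u = harmonic w (A, B) u \<and> q u = w / n * harmonic w (B, - A) u" for u
    using harmonic_oscillator_solution[of n w p q u] \<open>n > 0\<close> \<open>w > 0\<close> dp dq
    by (simp add: A_def B_def)
  have "(A, B) \<noteq> (0, 0)"
    using sol[of u1] \<open>p u1 \<noteq> 0\<close> by (auto simp: harmonic_def)
  moreover have "A * cos (w * (2 * pi)) + B * sin (w * (2 * pi)) = A"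
    using pp[of 0] sol[of 0] sol[of "2 * pi"] by (simp add: harmonic_def)
  moreover have "B * cos (w * (2 * pi)) - A * sin (w * (2 * pi)) = B"
    using pq[of 0] sol[of 0] sol[of "2 * pi"] \<open>n > 0\<close> \<open>w > 0\<close> by (simp add: harmonic_def)
  ultimately have "cos (w * (2 * pi)) = 1"
    by (rule rotation_fixing_nonzero_imp_cos_eq_1)
  then obtain j :: int where "w * (2 * pi) = real_of_int j * 2 * pi"
    using cos_one_2pi_int by blast
  then have "w = real (nat j)" and "nat j \<noteq> 0"
    using \<open>w > 0\<close> by auto
  then show ?thesis
    using c sol \<open>(A, B) \<noteq> (0, 0)\<close> by (intro exI[of _ "nat j"] exI[of _ A] exI[of _ B]) auto
qed

section \<open>The moving frame of the normal (sin nu, -cos nu)\<close>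

definition circle_normal :: "real \<Rightarrow> real \<Rightarrow> real \<times> real" where
  "circle_normal n u = (sin (n * u), - cos (n * u))"

definition circle_tangent :: "real \<Rightarrow> real \<Rightarrow> real \<times> real" where
  "circle_tangent n u = (cos (n * u), sin (n * u))"

lemma rotJ_circle_normal: "rotJ (circle_normal n u) = circle_tangent n u"
  by (simp add: rotJ_def circle_normal_def circle_tangent_def)

lemma circle_normal_has_vector_derivative:
  "(circle_normal n has_vector_derivative n *\<^sub>R circle_tangent n u) (at u)"
  unfolding circle_normal_def[abs_def] circle_tangent_def scaleR_Pair
  by (intro has_vector_derivative_Pair)
    (auto simp: has_real_derivative_iff_has_vector_derivative[symmetric]
      intro!: derivative_eq_intros)

lemma circle_tangent_has_vector_derivative:
  "(circle_tangent n has_vector_derivative - n *\<^sub>R circle_normal n u) (at u)"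
  unfolding circle_normal_def circle_tangent_def[abs_def] scaleR_Pair
  by (intro has_vector_derivative_Pair)
    (auto simp: has_real_derivative_iff_has_vector_derivative[symmetric]
      intro!: derivative_eq_intros)

lemma leg_ell_circle_normal: "leg_ell X (circle_normal n) u = n"
proof -
  have "vector_derivative (circle_normal n) (at u) = n *\<^sub>R circle_tangent n u"
    using circle_normal_has_vector_derivative vector_derivative_at by blast
  then show ?thesis
    by (simp add: leg_ell_def rotJ_circle_normal circle_tangent_def inner_prod_def
        mult.assoc flip: distrib_left)
qed

lemma circle_frame_decomposition:
  "x = inner x (circle_normal n u) *\<^sub>R circle_normal n u
    + inner x (circle_tangent n u) *\<^sub>R circle_tangent n u"
proof (cases x)
  case (Pair x1 x2)
  then show ?thesis
    by (simp add: circle_normal_def circle_tangent_def algebra_simps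
        flip: distrib_left[of x1] distrib_left[of x2])
qed

lemma support_function_derivatives:
  assumes "legendre_curve X (circle_normal n)"
  shows "((\<lambda>u. inner (X u) (circle_normal n u)) has_real_derivative
          n * inner (X u) (circle_tangent n u)) (at u)"
    and "((\<lambda>u. inner (X u) (circle_tangent n u)) has_real_derivative
          leg_beta X (circle_normal n) u - n * inner (X u) (circle_normal n u)) (at u)"
proof -
  obtain X' where dX: "\<And>u. (X has_vector_derivative X' u) (at u)"
    using assms unfolding legendre_curve_def C1_map_def by metis
  then have "vector_derivative X (at u) = X' u" for u
    by (rule vector_derivative_at)
  then have orth: "inner (X' v) (circle_normal n v) = 0"
    and beta: "leg_beta X (circle_normal n) v = inner (X' v) (circle_tangent n v)" for v
    using assms by (simp_all add: legendre_curve_def leg_beta_def rotJ_circle_normal)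
  show "((\<lambda>u. inner (X u) (circle_normal n u)) has_real_derivative
          n * inner (X u) (circle_tangent n u)) (at u)"
    using bounded_bilinear.has_vector_derivative[OF bounded_bilinear_inner dX[of u]
        circle_normal_has_vector_derivative[of n u]]
    by (simp add: has_real_derivative_iff_has_vector_derivative orth)
  show "((\<lambda>u. inner (X u) (circle_tangent n u)) has_real_derivative
      leg_beta X (circle_normal n) u - n * inner (X u) (circle_normal n u)) (at u)"
    using bounded_bilinear.has_vector_derivative[OF bounded_bilinear_inner dX[of u]
        circle_tangent_has_vector_derivative[of n u]]
    by (simp add: has_real_derivative_iff_has_vector_derivative beta)
qed

lemma harmonic_has_real_derivative:
  "(harmonic m a has_real_derivative harmonic m (- m *\<^sub>R rotJ a) u) (at u)"
  unfolding harmonic_def[abs_def]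
  by (auto simp: rotJ_def intro!: derivative_eq_intros)

lemma harmonic_scaleR: "harmonic m (r *\<^sub>R a) u = r * harmonic m a u"
  by (simp add: harmonic_def algebra_simps)

definition frame_curve :: "real \<Rightarrow> real \<Rightarrow> (real \<times> real) \<times> real \<times> real \<Rightarrow> real \<Rightarrow> real \<times> real" where
  "frame_curve n m c u = harmonic m (fst c) u *\<^sub>R circle_normal n u
    + harmonic m (snd c) u *\<^sub>R circle_tangent n u"

fun frame_coeffs_deriv :: "real \<Rightarrow> real
      \<Rightarrow> (real \<times> real) \<times> real \<times> real \<Rightarrow> (real \<times> real) \<times> real \<times> real" where
  "frame_coeffs_deriv n m (a, b) = (- m *\<^sub>R rotJ a - n *\<^sub>R b, n *\<^sub>R a - m *\<^sub>R rotJ b)"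

lemma frame_curve_has_vector_derivative:
  "(frame_curve n m c has_vector_derivative frame_curve n m (frame_coeffs_deriv n m c) u) (at u)"
proof -
  obtain a b where c: "c = (a, b)" by (cases c)
  have "(frame_curve n m c has_vector_derivative
      harmonic m a u *\<^sub>R (n *\<^sub>R circle_tangent n u)
        + harmonic m (- m *\<^sub>R rotJ a) u *\<^sub>R circle_normal n u
      + (harmonic m b u *\<^sub>R (- n *\<^sub>R circle_normal n u)
        + harmonic m (- m *\<^sub>R rotJ b) u *\<^sub>R circle_tangent n u)) (at u)"
    unfolding frame_curve_def[abs_def] c fst_conv snd_conv
    by (intro has_vector_derivative_add has_vector_derivative_scaleR harmonic_has_real_derivative
        circle_normal_has_vector_derivative circle_tangent_has_vector_derivative)
  then show ?thesis
    by (simp add: c frame_curve_def harmonic_def rotJ_def circle_normal_def circle_tangent_def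
        algebra_simps)
qed

lemma inner_frame_curve_normal:
  "inner (frame_curve n m (a, b) u) (circle_normal n u) = harmonic m a u"
  by (simp add: frame_curve_def circle_normal_def circle_tangent_def inner_prod_def algebra_simps
      flip: distrib_left)

lemma smooth_curve_frame_curve: "smooth_curve (frame_curve n m c)"
  unfolding smooth_curve_def
  by (intro exI[of _ "\<lambda>i. frame_curve n m ((frame_coeffs_deriv n m ^^ i) c)"] conjI allI)
    (simp_all add: frame_curve_has_vector_derivative)

lemma circle_normal_eq_frame_curve: "circle_normal n = frame_curve n 0 ((1, 0), (0, 0))"
  by (simp add: fun_eq_iff frame_curve_def harmonic_def)

lemma frame_curve_resonant: "frame_curve n n ((a1, a2), (a2, - a1)) u = (a2, - a1)"
  by (simp add: frame_curve_def harmonic_def circle_normal_def circle_tangent_def algebra_simps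
      flip: distrib_left)

section \<open>Homothetic profiles\<close>

definition homothetic_profile :: "real \<Rightarrow> real \<Rightarrow> real \<Rightarrow> real \<Rightarrow> real \<Rightarrow> real \<times> real" where
  "homothetic_profile n m C1 C2 u =
     C1 *\<^sub>R
       ( n / (n ^ 2 - m ^ 2) * sin (n * u) * cos (m * u)
         - m / (n ^ 2 - m ^ 2) * cos (n * u) * sin (m * u),
         - n / (n ^ 2 - m ^ 2) * cos (n * u) * cos (m * u)
         - m / (n ^ 2 - m ^ 2) * sin (n * u) * sin (m * u))
   + C2 *\<^sub>R
       ( n / (n ^ 2 - m ^ 2) * sin (n * u) * sin (m * u)
         + m / (n ^ 2 - m ^ 2) * cos (n * u) * cos (m * u),
         - n / (n ^ 2 - m ^ 2) * cos (n * u) * sin (m * u)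
         + m / (n ^ 2 - m ^ 2) * sin (n * u) * cos (m * u))"

lemma homothetic_profile_eq_frame_curve:
  "homothetic_profile n m C1 C2 =
     frame_curve n m ((n / (n\<^sup>2 - m\<^sup>2)) *\<^sub>R (C1, C2), (m / (n\<^sup>2 - m\<^sup>2)) *\<^sub>R (C2, - C1))"
  by (simp add: fun_eq_iff homothetic_profile_def frame_curve_def harmonic_def circle_normal_def
      circle_tangent_def algebra_simps)

lemma homothetic_profile_has_vector_derivative:
  assumes "n\<^sup>2 \<noteq> m\<^sup>2"
  shows "(homothetic_profile n m C1 C2 has_vector_derivative
        harmonic m (C1, C2) u *\<^sub>R circle_tangent n u) (at u)"
proof -
  define D where "D = n\<^sup>2 - m\<^sup>2"
  have "D \<noteq> 0" using assms by (simp add: D_def)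
  then have "frame_coeffs_deriv n m ((n / D) *\<^sub>R (C1, C2), (m / D) *\<^sub>R (C2, - C1))
      = ((0, 0), (C1, C2))"
    by (simp add: rotJ_def zero_prod_def field_simps)
      (simp add: D_def power2_eq_square algebra_simps)
  moreover have "frame_curve n m ((0, 0), (C1, C2)) u = harmonic m (C1, C2) u *\<^sub>R circle_tangent n u"
    by (simp add: frame_curve_def harmonic_def)
  ultimately show ?thesis
    using frame_curve_has_vector_derivative[of n m "((n / D) *\<^sub>R (C1, C2), (m / D) *\<^sub>R (C2, - C1))" u]
    by (simp only: homothetic_profile_eq_frame_curve D_def)
qed

lemma leg_beta_homothetic_profile:
  assumes "n\<^sup>2 \<noteq> m\<^sup>2"
  shows "leg_beta (homothetic_profile n m C1 C2) (circle_normal n) u = harmonic m (C1, C2) u"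
proof -
  have "vector_derivative (homothetic_profile n m C1 C2) (at u)
      = harmonic m (C1, C2) u *\<^sub>R circle_tangent n u"
    using homothetic_profile_has_vector_derivative[OF assms] vector_derivative_at by blast
  then show ?thesis
    by (simp add: leg_beta_def rotJ_circle_normal circle_tangent_def inner_prod_def mult.assoc
        flip: distrib_left)
qed

lemma inner_homothetic_profile_normal:
  "inner (homothetic_profile n m C1 C2 u) (circle_normal n u)
    = n / (n\<^sup>2 - m\<^sup>2) * harmonic m (C1, C2) u"
  by (simp only: homothetic_profile_eq_frame_curve inner_frame_curve_normal harmonic_scaleR)

lemma homothetic_inverse_curvature_flowI:
  fixes n m :: real
  assumes "n > 0" and "n\<^sup>2 \<noteq> m\<^sup>2"
    and leg: "legendre_curve (homothetic_profile n m C1 C2) (circle_normal n)"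
    and lam: "\<And>t. t \<ge> 0 \<Longrightarrow> lam t = exp ((1 - m\<^sup>2 / n\<^sup>2) * t)"
  shows "inverse_curvature_flow (\<lambda>u t. lam t *\<^sub>R homothetic_profile n m C1 C2 u)
          (\<lambda>u t. circle_normal n u)"
proof (rule inverse_curvature_flow_scalingI[OF leg _ _ _ lam])
  show "smooth_curve (homothetic_profile n m C1 C2)"
    by (simp add: homothetic_profile_eq_frame_curve smooth_curve_frame_curve)
  show "smooth_curve (circle_normal n)"
    by (simp add: circle_normal_eq_frame_curve smooth_curve_frame_curve)
  show "leg_ell (homothetic_profile n m C1 C2) (circle_normal n) u > 0" for u
    using \<open>n > 0\<close> by (simp add: leg_ell_circle_normal)
  show "leg_beta (homothetic_profile n m C1 C2) (circle_normal n) u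
      = (1 - m\<^sup>2 / n\<^sup>2) * inner (homothetic_profile n m C1 C2 u) (circle_normal n u)
        * leg_ell (homothetic_profile n m C1 C2) (circle_normal n) u" for u
    using assms(1,2)
    by (simp add: leg_beta_homothetic_profile inner_homothetic_profile_normal leg_ell_circle_normal
        field_simps power2_eq_square)
qed

definition admissible_constants :: "nat \<Rightarrow> nat \<Rightarrow> real \<Rightarrow> real \<Rightarrow> bool" where
  "admissible_constants n m C1 C2 \<longleftrightarrow> (m \<ge> 1 \<and> m \<noteq> n \<and> (C1, C2) \<noteq> (0, 0)) \<or> (m = 0 \<and> C1 \<noteq> 0 \<and> C2 = 0)"

lemma legendre_circle_support_nonzero:
  assumes leg: "legendre_curve X (circle_normal n)" and "n \<noteq> 0" and noncst: "\<exists>u v. X u \<noteq> X v"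
  shows "\<exists>u. inner (X u) (circle_normal n u) \<noteq> 0"
proof (rule ccontr)
  assume "\<not> ?thesis"
  then have p0: "(\<lambda>u. inner (X u) (circle_normal n u)) = (\<lambda>_. 0)"
    by auto
  have "inner (X u) (circle_tangent n u) = 0" for u
    using support_function_derivatives(1)[OF leg, of u] DERIV_const[of 0] DERIV_unique \<open>n \<noteq> 0\<close>
    unfolding p0 by fastforce
  then have "X u = 0" for u
    using p0 circle_frame_decomposition[of "X u" n u] by (simp add: fun_eq_iff)
  then show False
    using noncst by simp
qed

lemma homothetic_inverse_curvature_flow_frame:
  fixes n :: nat
  assumes "n \<ge> 1" and leg: "legendre_curve X (circle_normal n)" and noncst: "\<exists>u v. X u \<noteq> X v"
    and "lam 0 = 1"
    and icf: "inverse_curvature_flow (\<lambda>u t. lam t *\<^sub>R X u) (\<lambda>u t. circle_normal n u)"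
  shows "\<exists>(m::nat) A B. (A, B) \<noteq> (0, 0) \<and> (m = 0 \<longrightarrow> B = 0)
      \<and> (\<forall>t\<ge>0. lam t = exp ((1 - real m ^ 2 / real n ^ 2) * t))
      \<and> X = frame_curve n m ((A, B), (real m / n) *\<^sub>R (B, - A))"
proof -
  have "real n > 0"
    using \<open>n \<ge> 1\<close> by simp
  define p where "p u = inner (X u) (circle_normal n u)" for u
  define q where "q u = inner (X u) (circle_tangent n u)" for u
  have X_pq: "X u = p u *\<^sub>R circle_normal n u + q u *\<^sub>R circle_tangent n u" for u
    unfolding p_def q_def by (rule circle_frame_decomposition)
  obtain u1 where "p u1 \<noteq> 0"
    using legendre_circle_support_nonzero[OF leg _ noncst] \<open>real n > 0\<close> by (auto simp: p_def)
  then obtain c where lam: "\<forall>t\<ge>0. lam t = exp (c * t)"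
    and beta: "\<And>u. leg_beta X (circle_normal n) u = c * p u * n"
    using inverse_curvature_flow_scalingD[OF icf leg \<open>lam 0 = 1\<close>, of u1]
    by (auto simp: p_def leg_ell_circle_normal)
  have dp: "(p has_real_derivative n * q u) (at u)" for u
    unfolding p_def[abs_def] q_def using leg by (rule support_function_derivatives)
  have dq: "(q has_real_derivative n * (c - 1) * p u) (at u)" for u
    using support_function_derivatives(2)[OF leg, of u] beta[of u]
    by (simp add: p_def q_def[abs_def] algebra_simps)
  have "periodic2pi X" and "periodic2pi (circle_normal n)"
    using leg by (simp_all add: legendre_curve_def)
  then have pp: "p (u + 2 * pi) = p u" and pq: "q (u + 2 * pi) = q u" for u
    by (simp_all add: p_def q_def periodic2pi_def flip: rotJ_circle_normal)
  obtain m :: nat and A B where c: "c = 1 - (real m)\<^sup>2 / (real n)\<^sup>2" and "(A, B) \<noteq> (0, 0)"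
    and "m = 0 \<longrightarrow> B = 0"
    and pq_sol: "\<And>u. p u = harmonic m (A, B) u \<and> q u = real m / n * harmonic m (B, - A) u"
    using periodic_oscillator_solutions[OF \<open>real n > 0\<close> dp dq pp pq \<open>p u1 \<noteq> 0\<close>] by blast
  have "X = frame_curve n m ((A, B), (real m / n) *\<^sub>R (B, - A))"
    using X_pq pq_sol by (simp add: fun_eq_iff frame_curve_def harmonic_def algebra_simps)
  then show ?thesis
    using lam c \<open>(A, B) \<noteq> (0, 0)\<close> \<open>m = 0 \<longrightarrow> B = 0\<close>
    by (intro exI[of _ m] exI[of _ A] exI[of _ B]) simp
qed

lemma homothetic_inverse_curvature_flowD:
  fixes n :: nat
  assumes "n \<ge> 1" and leg: "legendre_curve X (circle_normal n)" and noncst: "\<exists>u v. X u \<noteq> X v"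
    and "lam 0 = 1"
    and icf: "inverse_curvature_flow (\<lambda>u t. lam t *\<^sub>R X u) (\<lambda>u t. circle_normal n u)"
  shows "\<exists>m C1 C2. admissible_constants n m C1 C2
      \<and> (\<forall>t\<ge>0. lam t = exp ((1 - real m ^ 2 / real n ^ 2) * t)) \<and> X = homothetic_profile n m C1 C2"
proof -
  obtain m :: nat and A B where "(A, B) \<noteq> (0, 0)" and "m = 0 \<longrightarrow> B = 0"
    and lam: "\<forall>t\<ge>0. lam t = exp ((1 - real m ^ 2 / real n ^ 2) * t)"
    and X: "X = frame_curve n m ((A, B), (real m / n) *\<^sub>R (B, - A))"
    using homothetic_inverse_curvature_flow_frame[OF assms] by metis
  have "m \<noteq> n"
  proof
    assume "m = n"
    then have "X u = (B, - A)" for u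
      using \<open>n \<ge> 1\<close> by (simp add: X frame_curve_resonant)
    then show False
      using noncst by simp
  qed
  define D where "D = (real n)\<^sup>2 - (real m)\<^sup>2"
  have "D \<noteq> 0" and "real n \<noteq> 0"
    using \<open>m \<noteq> n\<close> \<open>n \<ge> 1\<close> by (simp_all add: D_def)
  then have "admissible_constants n m (A * D / n) (B * D / n)"
    using \<open>m \<noteq> n\<close> \<open>(A, B) \<noteq> (0, 0)\<close> \<open>m = 0 \<longrightarrow> B = 0\<close> by (auto simp: admissible_constants_def)
  moreover have "X = homothetic_profile n m (A * D / n) (B * D / n)"
    using \<open>D \<noteq> 0\<close> \<open>real n \<noteq> 0\<close> by (simp add: X D_def homothetic_profile_eq_frame_curve)
  ultimately show ?thesis
    using lam by blast
qed

theorem theorem1p2: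
  fixes n :: nat and Xs :: "real \<Rightarrow> real \<times> real" and lam :: "real \<Rightarrow> real"
  defines "\<nu>s \<equiv> (\<lambda>u. (sin (real n * u), - cos (real n * u)))"
  assumes n_pos: "n \<ge> 1"
    and leg: "legendre_curve Xs \<nu>s"
    and noncst: "\<exists>u v. Xs u \<noteq> Xs v"
    and lam0: "lam 0 = 1"
  shows "(inverse_curvature_flow (\<lambda>u t. lam t *\<^sub>R Xs u) (\<lambda>u t. \<nu>s u))
      \<longleftrightarrow> (\<exists>(m::nat) (C1::real) (C2::real).
            ((m \<ge> 1 \<and> m \<noteq> n \<and> (C1, C2) \<noteq> (0, 0)) \<or> (m = 0 \<and> C1 \<noteq> 0 \<and> C2 = 0))
          \<and> (\<forall>t\<ge>0. lam t = exp ((1 - real m ^ 2 / real n ^ 2) * t))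
          \<and> (\<forall>u. Xs u =
               C1 *\<^sub>R
                 ( real n / (real n ^ 2 - real m ^ 2) * sin (real n * u) * cos (real m * u)
                   - real m / (real n ^ 2 - real m ^ 2) * cos (real n * u) * sin (real m * u),
                   - real n / (real n ^ 2 - real m ^ 2) * cos (real n * u) * cos (real m * u)
                   - real m / (real n ^ 2 - real m ^ 2) * sin (real n * u) * sin (real m * u))
             + C2 *\<^sub>R
                 ( real n / (real n ^ 2 - real m ^ 2) * sin (real n * u) * sin (real m * u)
                   + real m / (real n ^ 2 - real m ^ 2) * cos (real n * u) * cos (real m * u),
                   - real n / (real n ^ 2 - real m ^ 2) * cos (real n * u) * sin (real m * u)
                   + real m / (real n ^ 2 - real m ^ 2) * sin (real n * u) * cos (real m * u))))
    \<and> (\<forall>(m::nat) (C1::real) (C2::real).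
          inverse_curvature_flow (\<lambda>u t. lam t *\<^sub>R Xs u) (\<lambda>u t. \<nu>s u)
          \<and> ((m \<ge> 1 \<and> m \<noteq> n \<and> (C1, C2) \<noteq> (0, 0)) \<or> (m = 0 \<and> C1 \<noteq> 0 \<and> C2 = 0))
          \<and> (\<forall>t\<ge>0. lam t = exp ((1 - real m ^ 2 / real n ^ 2) * t))
          \<and> (\<forall>u. Xs u =
               C1 *\<^sub>R
                 ( real n / (real n ^ 2 - real m ^ 2) * sin (real n * u) * cos (real m * u)
                   - real m / (real n ^ 2 - real m ^ 2) * cos (real n * u) * sin (real m * u),
                   - real n / (real n ^ 2 - real m ^ 2) * cos (real n * u) * cos (real m * u)
                   - real m / (real n ^ 2 - real m ^ 2) * sin (real n * u) * sin (real m * u))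
             + C2 *\<^sub>R
                 ( real n / (real n ^ 2 - real m ^ 2) * sin (real n * u) * sin (real m * u)
                   + real m / (real n ^ 2 - real m ^ 2) * cos (real n * u) * cos (real m * u),
                   - real n / (real n ^ 2 - real m ^ 2) * cos (real n * u) * sin (real m * u)
                   + real m / (real n ^ 2 - real m ^ 2) * sin (real n * u) * cos (real m * u)))
          \<longrightarrow> (\<forall>u. leg_ell Xs \<nu>s u = real n \<and> leg_beta Xs \<nu>s u = C1 * cos (real m * u) + C2 * sin (real m * u)))"
proof -
  have \<nu>s: "\<nu>s = circle_normal (real n)"
    by (simp add: \<nu>s_def circle_normal_def fun_eq_iff)
  have leg': "legendre_curve Xs (circle_normal (real n))"
    using leg by (simp add: \<nu>s)
  have freq: "(real n)\<^sup>2 \<noteq> (real m)\<^sup>2" if "admissible_constants n m C1 C2" for m C1 C2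
    using that n_pos by (auto simp: admissible_constants_def)
  let ?F = "inverse_curvature_flow (\<lambda>u t. lam t *\<^sub>R Xs u) (\<lambda>u t. circle_normal (real n) u)"
  have "?F \<Longrightarrow> \<exists>m C1 C2. admissible_constants n m C1 C2
      \<and> (\<forall>t\<ge>0. lam t = exp ((1 - real m ^ 2 / real n ^ 2) * t)) \<and> Xs = homothetic_profile n m C1 C2"
    by (rule homothetic_inverse_curvature_flowD[of n Xs lam, OF n_pos leg' noncst lam0])
  moreover have "?F"
    if "admissible_constants n m C1 C2" and "\<forall>t\<ge>0. lam t = exp ((1 - real m ^ 2 / real n ^ 2) * t)"
      and "Xs = homothetic_profile n m C1 C2" for m C1 C2
    using homothetic_inverse_curvature_flowI[OF _ freq[OF that(1)]] that(2,3) leg' n_pos by simp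
  moreover have "leg_ell Xs (circle_normal (real n)) u = real n
      \<and> leg_beta Xs (circle_normal (real n)) u = C1 * cos (real m * u) + C2 * sin (real m * u)"
    if "admissible_constants n m C1 C2" and "Xs = homothetic_profile n m C1 C2" for m C1 C2 u
    using leg_beta_homothetic_profile[OF freq[OF that(1)]] that(2)
    by (simp add: leg_ell_circle_normal harmonic_def)
  ultimately show ?thesis
    unfolding homothetic_profile_def[symmetric] admissible_constants_def[symmetric]
    fun_eq_iff[symmetric] \<nu>s
    by blast
qed

end
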